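(* Let $X_1,\ldots,X_n$ be $\{0,1\}$-valued random variables satisfying negative regression and let $f:\{0,1\}^n\to\mathbb{R}$ be $1$-Lipschitz. Then there exists a random permutation $\pi(1),\ldots,\pi(n)$ of $[n]$ such that: (i) $\pi(1)$ is deterministic; (ii) for each $1\le k<n$, $\pi(k+1)$ is a deterministic function of the set $\pi([k])=\{\pi(1),\ldots,\pi(k)\}$ and the values $X_{\pi([k])}$; (iii) setting $Y_k=\mathbb{E}[f(X)\mid \pi([k]), X_{\pi([k])}]$ for $0\le k\le n$ (with $Y_0=\mathbb{E}[f(X)]$), the sequence $Y_0,Y_1,\ldots,Y_n$ is a martingale; (iv) for each $k<n$ and each $K\subseteq[n]$, $a_K\in\{0,1\}^K$ with $\Pr[\pi([k])=K, X_K=a_K]>0$, there exist $\alpha<\beta$ with $\beta-\alpha\le 2$ such that, conditioned on $\pi([k])=K, X_K=a_K$, $Y_{k+1}-Y_k\in[\alpha,\beta]$ almost surely; (v) if $f$ is moreover monotone (non-decreasing in each coordinate), then in (iv) one can take $\beta-\alpha\le 1$.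
   Context: For $S\subseteq[n]$, $X_S\in\{0,1\}^S$ denotes the tuple $(X_i)_{i\in S}$; $X=(X_1,\ldots,X_n)$. The variables $X_1,\ldots,X_n$ satisfy negative regression if for all disjoint $I,J\subseteq[n]$, every non-decreasing function $g:\{0,1\}^I\to\mathbb{R}$, and all $a\le b$ in $\{0,1\}^J$ (coordinatewise) such that $\Pr[X_J=a]>0$ and $\Pr[X_J=b]>0$, we have $\mathbb{E}[g(X_I)\mid X_J=a]\ge \mathbb{E}[g(X_I)\mid X_J=b]$. A function $f:\{0,1\}^n\to\mathbb{R}$ is $1$-Lipschitz if changing any single coordinate of its argument changes its value by at most $1$ in absolute value. The conditional expectation $Y_k$ is with respect to the information consisting of the set $\pi([k])$ together with the values of the variables indexed by it. *)

theory Defs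
  imports "HOL-Probability.Probability"
begin

text \<open>The vector \<open>(X_1,...,X_n)\<close> is represented by its joint law, a pmf \<open>P\<close> on
  assignments \<open>x :: nat \<Rightarrow> bool\<close>; coordinates are indexed by \<open>{..<n}\<close> and
  assignments are False outside \<open>{..<n}\<close> (the "cube").\<close>

definition cube :: "nat \<Rightarrow> (nat \<Rightarrow> bool) set" where
  "cube n = {x. \<forall>i. n \<le> i \<longrightarrow> \<not> x i}"

definition cexp :: "(nat \<Rightarrow> bool) pmf \<Rightarrow> (nat \<Rightarrow> bool) set \<Rightarrow> ((nat \<Rightarrow> bool) \<Rightarrow> real) \<Rightarrow> real" where
  "cexp P A g = measure_pmf.expectation P (\<lambda>x. indicator A x * g x) / measure_pmf.prob P A"

definition negative_regression :: "nat \<Rightarrow> (nat \<Rightarrow> bool) pmf \<Rightarrow> bool" where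
  "negative_regression n P \<longleftrightarrow>
     (\<forall>I J. I \<subseteq> {..<n} \<longrightarrow> J \<subseteq> {..<n} \<longrightarrow> I \<inter> J = {} \<longrightarrow>
       (\<forall>g :: (nat \<Rightarrow> bool) \<Rightarrow> real.
          (\<forall>x y. (\<forall>i\<in>I. x i \<le> y i) \<longrightarrow> g x \<le> g y) \<longrightarrow>
          (\<forall>a b :: nat \<Rightarrow> bool. (\<forall>j\<in>J. a j \<le> b j) \<longrightarrow>
             measure_pmf.prob P {x. \<forall>j\<in>J. x j = a j} > 0 \<longrightarrow>
             measure_pmf.prob P {x. \<forall>j\<in>J. x j = b j} > 0 \<longrightarrow>
             cexp P {x. \<forall>j\<in>J. x j = a j} g \<ge> cexp P {x. \<forall>j\<in>J. x j = b j} g)))"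

definition lipschitz1 :: "nat \<Rightarrow> ((nat \<Rightarrow> bool) \<Rightarrow> real) \<Rightarrow> bool" where
  "lipschitz1 n f \<longleftrightarrow> (\<forall>x\<in>cube n. \<forall>i<n. \<bar>f x - f (x(i := \<not> x i))\<bar> \<le> 1)"

definition monotone_cube :: "nat \<Rightarrow> ((nat \<Rightarrow> bool) \<Rightarrow> real) \<Rightarrow> bool" where
  "monotone_cube n f \<longleftrightarrow> (\<forall>x\<in>cube n. \<forall>y\<in>cube n. (\<forall>i<n. x i \<le> y i) \<longrightarrow> f x \<le> f y)"

text \<open>The random permutation is \<open>\<pi> x :: nat \<Rightarrow> nat\<close> (positions \<open>0..<n\<close>, so
  \<open>\<pi>([k])\<close> is \<open>\<pi> x ` {..<k}\<close>). The information after \<open>k\<close> steps at outcome \<open>x\<close>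
  is the event that the revealed set and the revealed values agree with those at \<open>x\<close>.\<close>
definition hist :: "((nat \<Rightarrow> bool) \<Rightarrow> nat \<Rightarrow> nat) \<Rightarrow> nat \<Rightarrow> (nat \<Rightarrow> bool) \<Rightarrow> (nat \<Rightarrow> bool) set" where
  "hist \<pi> k x = {y. \<pi> y ` {..<k} = \<pi> x ` {..<k} \<and> (\<forall>i\<in>\<pi> x ` {..<k}. y i = x i)}"

definition Ymart :: "(nat \<Rightarrow> bool) pmf \<Rightarrow> ((nat \<Rightarrow> bool) \<Rightarrow> real) \<Rightarrow> ((nat \<Rightarrow> bool) \<Rightarrow> nat \<Rightarrow> nat)
    \<Rightarrow> nat \<Rightarrow> (nat \<Rightarrow> bool) \<Rightarrow> real" where
  "Ymart P f \<pi> k x = cexp P (hist \<pi> k x) f"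

end

theory Submission
  imports Defs
begin

text \<open>The coordinates are revealed greedily: once the set \<open>K\<close> and the values on it are known,
  reveal a new coordinate \<open>i\<close> whose value is nonnegatively correlated, given the revealed values,
  with the number \<open>S\<close> of ones among the unrevealed coordinates; one exists because these
  covariances sum to \<open>Var S \<ge> 0\<close>. The \<open>Y\<^sub>k\<close> form a Doob martingale by the tower property.
  Given the history, \<open>Y\<^sub>k\<^sub>+\<^sub>1 - Y\<^sub>k\<close> takes only two values, differing by
  \<open>E[f | X\<^sub>i = 1] - E[f | X\<^sub>i = 0]\<close>. Let \<open>g\<close> be \<open>f\<close> with \<open>X\<^sub>i\<close> forced to \<open>0\<close>; then
  \<open>f - g \<in> [-1, 1]\<close> (\<open>[0, 1]\<close> for monotone \<open>f\<close>), and \<open>g\<close> depends only on the remaining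
  coordinates \<open>I\<close>. By the Lipschitz property \<open>S\<^sub>I + g\<close> and \<open>S\<^sub>I - g\<close> are monotone, so negative
  regression bounds \<open>|E[g | X\<^sub>i = 1] - E[g | X\<^sub>i = 0]|\<close> by
  \<open>E[S\<^sub>I | X\<^sub>i = 0] - E[S\<^sub>I | X\<^sub>i = 1]\<close>, which is at most \<open>1\<close> by the choice of \<open>i\<close>;
  for monotone \<open>f\<close> the function \<open>g\<close> is monotone too and this gap has a sign.\<close>

definition pexp :: "(nat \<Rightarrow> bool) pmf \<Rightarrow> (nat \<Rightarrow> bool) set \<Rightarrow> ((nat \<Rightarrow> bool) \<Rightarrow> real) \<Rightarrow> real" where
  "pexp P A g = (\<Sum>x\<in>set_pmf P \<inter> A. pmf P x * g x)"

lemma pexp_cong: "(\<And>x. x \<in> set_pmf P \<Longrightarrow> x \<in> A \<Longrightarrow> g x = h x) \<Longrightarrow> pexp P A g = pexp P A h"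
  unfolding pexp_def by (rule sum.cong) auto

lemma pexp_mono: "(\<And>x. x \<in> set_pmf P \<Longrightarrow> x \<in> A \<Longrightarrow> g x \<le> h x) \<Longrightarrow> pexp P A g \<le> pexp P A h"
  unfolding pexp_def by (rule sum_mono) (auto intro: mult_left_mono)

lemma pexp_add: "pexp P A (\<lambda>x. g x + h x) = pexp P A g + pexp P A h"
  unfolding pexp_def by (simp add: distrib_left sum.distrib)

lemma pexp_diff: "pexp P A (\<lambda>x. g x - h x) = pexp P A g - pexp P A h"
  unfolding pexp_def by (simp add: right_diff_distrib sum_subtractf)

lemma pexp_cmult: "pexp P A (\<lambda>x. c * g x) = c * pexp P A g"
  unfolding pexp_def by (simp add: sum_distrib_left algebra_simps)

lemma pexp_square_le: "(pexp P A g)\<^sup>2 \<le> pexp P A (\<lambda>_. 1) * pexp P A (\<lambda>x. (g x)\<^sup>2)"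
proof -
  have "(\<Sum>x\<in>set_pmf P \<inter> A. sqrt (pmf P x) * (sqrt (pmf P x) * g x))\<^sup>2
     \<le> (\<Sum>x\<in>set_pmf P \<inter> A. (sqrt (pmf P x))\<^sup>2) * (\<Sum>x\<in>set_pmf P \<inter> A. (sqrt (pmf P x) * g x)\<^sup>2)"
    by (rule Cauchy_Schwarz_ineq_sum)
  then show ?thesis
    unfolding pexp_def by (simp add: mult.assoc[symmetric] power_mult_distrib)
qed

locale finite_support =
  fixes P :: "(nat \<Rightarrow> bool) pmf"
  assumes finite_support: "finite (set_pmf P)"
begin

lemma expectation_indicator_eq_pexp:
  "measure_pmf.expectation P (\<lambda>x. indicator A x * g x) = pexp P A g"
  unfolding pexp_def
  by (subst integral_measure_pmf_real[OF finite_support])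
     (auto simp: sum.inter_restrict[OF finite_support] intro!: sum.cong)

lemma prob_eq_pexp: "measure_pmf.prob P A = pexp P A (\<lambda>_. 1)"
  using expectation_indicator_eq_pexp[of A "\<lambda>_. 1"] by simp

lemma cexp_eq_pexp: "cexp P A g = pexp P A g / pexp P A (\<lambda>_. 1)"
  unfolding cexp_def expectation_indicator_eq_pexp prob_eq_pexp ..

lemma pexp_split: "pexp P A g = pexp P (A \<inter> {x. Q x}) g + pexp P (A \<inter> {x. \<not> Q x}) g"
proof -
  have "set_pmf P \<inter> A \<inter> {x. Q x} = set_pmf P \<inter> (A \<inter> {x. Q x})"
    "set_pmf P \<inter> A - {x. Q x} = set_pmf P \<inter> (A \<inter> {x. \<not> Q x})" by auto
  then show ?thesis
    unfolding pexp_def using sum.Int_Diff[of "set_pmf P \<inter> A" _ "{x. Q x}"] finite_support by simp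
qed

lemma pexp_const_cexp: "pexp P A (\<lambda>_. cexp P A g) = pexp P A g"
proof (cases "set_pmf P \<inter> A = {}")
  case True
  then show ?thesis by (simp add: pexp_def)
next
  case False
  then have "pexp P A (\<lambda>_. 1) \<noteq> 0"
    using measure_pmf_zero_iff[of P A] prob_eq_pexp by simp
  then show ?thesis
    using pexp_cmult[of P A "cexp P A g" "\<lambda>_. 1"] by (simp add: cexp_eq_pexp)
qed

lemma cexp_cong: "(\<And>x. x \<in> set_pmf P \<Longrightarrow> x \<in> A \<Longrightarrow> g x = h x) \<Longrightarrow> cexp P A g = cexp P A h"
  unfolding cexp_eq_pexp by (metis pexp_cong)

lemma cexp_add: "cexp P A (\<lambda>x. g x + h x) = cexp P A g + cexp P A h"
  unfolding cexp_eq_pexp pexp_add by (simp add: add_divide_distrib)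

lemma cexp_diff: "cexp P A (\<lambda>x. g x - h x) = cexp P A g - cexp P A h"
  unfolding cexp_eq_pexp pexp_diff by (simp add: diff_divide_distrib)

lemma cexp_bounded:
  assumes "measure_pmf.prob P A > 0"
    and "\<And>x. x \<in> set_pmf P \<Longrightarrow> x \<in> A \<Longrightarrow> lo \<le> g x \<and> g x \<le> hi"
  shows "lo \<le> cexp P A g \<and> cexp P A g \<le> hi"
proof -
  have pos: "pexp P A (\<lambda>_. 1) > 0" using assms(1) prob_eq_pexp by simp
  have "pexp P A (\<lambda>_. lo * 1) \<le> pexp P A g" "pexp P A g \<le> pexp P A (\<lambda>_. hi * 1)"
    by (rule pexp_mono; simp add: assms(2))+
  then have "lo * pexp P A (\<lambda>_. 1) \<le> pexp P A g" "pexp P A g \<le> hi * pexp P A (\<lambda>_. 1)"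
    by (simp_all only: pexp_cmult)
  with pos show ?thesis
    unfolding cexp_eq_pexp by (simp add: pos_le_divide_eq pos_divide_le_eq)
qed

lemma cexp_binary_tower:
  fixes Q :: "(nat \<Rightarrow> bool) \<Rightarrow> bool"
  shows "cexp P H (\<lambda>y. cexp P (H \<inter> {z. Q z = Q y}) f) = cexp P H f"
proof -
  have branch: "pexp P (H \<inter> {z. Q z = b}) (\<lambda>y. cexp P (H \<inter> {z. Q z = Q y}) f) = pexp P (H \<inter> {z. Q z = b}) f"
    for b
    using pexp_cong[of P "H \<inter> {z. Q z = b}" "\<lambda>y. cexp P (H \<inter> {z. Q z = Q y}) f"]
      pexp_const_cexp[of "H \<inter> {z. Q z = b}" f] by auto
  have "pexp P H (\<lambda>y. cexp P (H \<inter> {z. Q z = Q y}) f) = pexp P H f"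
    using branch[of True] branch[of False] pexp_split[of H _ Q] by simp
  then show ?thesis
    unfolding cexp_eq_pexp[of H] by simp
qed

end

definition ones :: "nat set \<Rightarrow> (nat \<Rightarrow> bool) \<Rightarrow> real" where
  "ones U x = (\<Sum>j\<in>U. of_bool (x j))"

text \<open>The covariance of \<open>X\<^sub>i\<close> and \<open>S\<close> on \<open>A\<close> is nonnegative, i.e.
  \<open>E[S | A, X\<^sub>i = 0] \<le> E[S | A, X\<^sub>i = 1]\<close>, cross-multiplied so that it is also meaningful when
  one of the two branches is null.\<close>
definition nonneg_corr :: "(nat \<Rightarrow> bool) pmf \<Rightarrow> (nat \<Rightarrow> bool) set \<Rightarrow> ((nat \<Rightarrow> bool) \<Rightarrow> real) \<Rightarrow> nat \<Rightarrow> bool" where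
  "nonneg_corr P A S i \<longleftrightarrow>
     pexp P (A \<inter> {x. x i}) (\<lambda>_. 1) * pexp P (A \<inter> {x. \<not> x i}) S
     \<le> pexp P (A \<inter> {x. \<not> x i}) (\<lambda>_. 1) * pexp P (A \<inter> {x. x i}) S"

context finite_support
begin

lemma cexp_const: "measure_pmf.prob P A > 0 \<Longrightarrow> cexp P A (\<lambda>_. c) = c"
  using pexp_cmult[of P A c "\<lambda>_. 1"] unfolding cexp_eq_pexp prob_eq_pexp by simp

lemma nonneg_corr_iff:
  "nonneg_corr P A S i \<longleftrightarrow>
     pexp P (A \<inter> {x. x i}) (\<lambda>_. 1) * pexp P A S \<le> pexp P A (\<lambda>_. 1) * pexp P (A \<inter> {x. x i}) S"
  using pexp_split[of A S "\<lambda>x. x i"] pexp_split[of A "\<lambda>_. 1" "\<lambda>x. x i"]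
  unfolding nonneg_corr_def by (simp add: algebra_simps)

lemma nonneg_corr_cexp:
  assumes "nonneg_corr P A S i"
    and "measure_pmf.prob P (A \<inter> {x. x i}) > 0" "measure_pmf.prob P (A \<inter> {x. \<not> x i}) > 0"
  shows "cexp P (A \<inter> {x. \<not> x i}) S \<le> cexp P (A \<inter> {x. x i}) S"
  using assms unfolding nonneg_corr_def cexp_eq_pexp prob_eq_pexp
  by (simp add: divide_simps mult.commute)

lemma pexp_coord: "pexp P (A \<inter> {x. x i}) g = pexp P A (\<lambda>x. of_bool (x i) * g x)"
proof -
  have "pexp P (A \<inter> {x. x i}) (\<lambda>x. of_bool (x i) * g x) = pexp P (A \<inter> {x. x i}) g"
    by (rule pexp_cong) simp
  moreover have "pexp P (A \<inter> {x. \<not> x i}) (\<lambda>x. of_bool (x i) * g x) = 0"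
    unfolding pexp_def by (rule sum.neutral) auto
  ultimately show ?thesis
    using pexp_split[of A "\<lambda>x. of_bool (x i) * g x" "\<lambda>x. x i"] by simp
qed

lemma sum_pexp_coord:
  assumes "finite U"
  shows "(\<Sum>i\<in>U. pexp P (A \<inter> {x. x i}) g) = pexp P A (\<lambda>x. ones U x * g x)"
proof -
  have "(\<Sum>i\<in>U. pexp P (A \<inter> {x. x i}) g)
      = (\<Sum>i\<in>U. \<Sum>x\<in>set_pmf P \<inter> A. pmf P x * (of_bool (x i) * g x))"
    unfolding pexp_coord unfolding pexp_def ..
  also have "\<dots> = (\<Sum>x\<in>set_pmf P \<inter> A. \<Sum>i\<in>U. pmf P x * (of_bool (x i) * g x))"
    by (rule sum.swap)
  also have "\<dots> = pexp P A (\<lambda>x. ones U x * g x)"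
    unfolding pexp_def ones_def by (simp only: sum_distrib_left sum_distrib_right)
  finally show ?thesis .
qed

text \<open>On \<open>A\<close>, the covariances \<open>Cov(X\<^sub>i, ones U)\<close> for \<open>i \<in> U\<close> sum to \<open>Var(ones U) \<ge> 0\<close>.\<close>
lemma ex_nonneg_corr:
  assumes "finite U" "U \<noteq> {}"
  shows "\<exists>i\<in>U. nonneg_corr P A (ones U) i"
proof (rule ccontr)
  assume "\<not> ?thesis"
  then have "pexp P A (\<lambda>_. 1) * pexp P (A \<inter> {x. x i}) (ones U)
      < pexp P (A \<inter> {x. x i}) (\<lambda>_. 1) * pexp P A (ones U)" if "i \<in> U" for i
    using that by (auto simp: nonneg_corr_iff not_le)
  then have "(\<Sum>i\<in>U. pexp P A (\<lambda>_. 1) * pexp P (A \<inter> {x. x i}) (ones U))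
      < (\<Sum>i\<in>U. pexp P (A \<inter> {x. x i}) (\<lambda>_. 1) * pexp P A (ones U))"
    by (rule sum_strict_mono[OF assms])
  then have "pexp P A (\<lambda>_. 1) * pexp P A (\<lambda>x. ones U x * ones U x)
      < pexp P A (\<lambda>x. ones U x * 1) * pexp P A (ones U)"
    by (simp only: sum_distrib_left[symmetric] sum_distrib_right[symmetric] sum_pexp_coord[OF assms(1)])
  then show False
    using pexp_square_le[of P A "ones U"] by (simp add: power2_eq_square)
qed

end

lemma finite_cube: "finite (cube n)"
proof -
  have "cube n \<subseteq> (\<lambda>B i. i \<in> B) ` Pow {..<n}"
  proof
    fix x assume "x \<in> cube n"
    then have "{i. x i} \<in> Pow {..<n}" by (auto simp: cube_def not_less[symmetric])
    moreover have "x = (\<lambda>i. i \<in> {i. x i})" by auto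
    ultimately show "x \<in> (\<lambda>B i. i \<in> B) ` Pow {..<n}" by blast
  qed
  then show ?thesis by (rule finite_subset) auto
qed

lemma cube_upd: "x \<in> cube n \<Longrightarrow> i < n \<Longrightarrow> x(i := b) \<in> cube n"
  unfolding cube_def by auto

lemma lipschitz1_hamming:
  assumes lip: "lipschitz1 n f" and "u \<in> cube n" "v \<in> cube n"
  shows "f u - f v \<le> card {j. j < n \<and> u j \<noteq> v j}"
  using assms(2)
proof (induction "card {j. j < n \<and> u j \<noteq> v j}" arbitrary: u)
  case 0
  then have "u j = v j" for j
    using assms(3) by (cases "j < n") (auto simp: cube_def)
  then show ?case by simp
next
  case (Suc m)
  then obtain j where j: "j < n" "u j \<noteq> v j"
    by (metis (mono_tags, lifting) card.empty empty_Collect_eq nat.distinct(1))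
  have "{k. k < n \<and> (u(j := v j)) k \<noteq> v k} = {k. k < n \<and> u k \<noteq> v k} - {j}"
    by auto
  then have card: "card {k. k < n \<and> (u(j := v j)) k \<noteq> v k} = m"
    using Suc.hyps(2) j by simp
  have "f (u(j := v j)) - f v \<le> m"
    using Suc.hyps(1)[OF card[symmetric] cube_upd[OF Suc.prems j(1)]] card by simp
  moreover have "\<bar>f u - f (u(j := \<not> u j))\<bar> \<le> 1"
    using lip Suc.prems j(1) unfolding lipschitz1_def by blast
  moreover have "u(j := \<not> u j) = u(j := v j)" using j by auto
  ultimately show ?case using Suc.hyps(2) by simp
qed

lemma ones_diff:
  assumes "finite I" "\<forall>j\<in>I. x j \<le> y j"
  shows "ones I y - ones I x = card {j\<in>I. x j \<noteq> y j}"
proof -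
  have "ones I y - ones I x = (\<Sum>j\<in>I. of_bool (x j \<noteq> y j))"
    unfolding ones_def sum_subtractf[symmetric] by (rule sum.cong) (use assms(2) in auto)
  then show ?thesis using assms(1) by (simp add: Collect_conj_eq Int_commute)
qed

lemma ones_add_mono:
  fixes h :: "(nat \<Rightarrow> bool) \<Rightarrow> real"
  assumes "finite I" and dist: "\<And>u v. h u - h v \<le> card {j\<in>I. u j \<noteq> v j}"
    and "\<forall>j\<in>I. x j \<le> y j"
  shows "h x + ones I x \<le> h y + ones I y" and "ones I x - h x \<le> ones I y - h y"
proof -
  have "{j\<in>I. y j \<noteq> x j} = {j\<in>I. x j \<noteq> y j}" by auto
  then show "h x + ones I x \<le> h y + ones I y" "ones I x - h x \<le> ones I y - h y"
    using dist[of x y] dist[of y x] ones_diff[OF assms(1,3)] by auto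
qed

definition cylinder :: "nat set \<Rightarrow> (nat \<Rightarrow> bool) \<Rightarrow> (nat \<Rightarrow> bool) set" where
  "cylinder K r = {x. \<forall>j\<in>K. x j = r j}"

lemma negative_regression_branch:
  assumes nr: "negative_regression n P" and K: "K \<subseteq> {..<n}" and i: "i < n" "i \<notin> K"
    and pos: "measure_pmf.prob P (cylinder K r \<inter> {x. x i}) > 0"
      "measure_pmf.prob P (cylinder K r \<inter> {x. \<not> x i}) > 0"
    and mono: "\<And>x y. \<forall>j\<in>{..<n} - insert i K. x j \<le> y j \<Longrightarrow> G x \<le> G y"
  shows "cexp P (cylinder K r \<inter> {x. x i}) G \<le> cexp P (cylinder K r \<inter> {x. \<not> x i}) G"
proof -
  have branch: "{x. \<forall>j\<in>insert i K. x j = (r(i := b)) j} = cylinder K r \<inter> {x. x i = b}" for b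
    using i(2) by (auto simp: cylinder_def)
  have pos_branch: "measure_pmf.prob P {x. \<forall>j\<in>insert i K. x j = (r(i := b)) j} > 0" for b
    unfolding branch using pos by (cases b) simp_all
  have "cexp P {x. \<forall>j\<in>insert i K. x j = (r(i := True)) j} G
      \<le> cexp P {x. \<forall>j\<in>insert i K. x j = (r(i := False)) j} G"
    by (rule nr[unfolded negative_regression_def, rule_format,
          of "{..<n} - insert i K" "insert i K" G "r(i := False)" "r(i := True)",
          OF _ _ _ _ _ pos_branch pos_branch])
       (use K i mono in auto)
  then show ?thesis by (simp only: branch) simp
qed

locale cube_distribution =
  fixes n :: nat and P :: "(nat \<Rightarrow> bool) pmf"
  assumes support_cube: "set_pmf P \<subseteq> cube n"

sublocale cube_distribution \<subseteq> finite_support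
  using finite_subset[OF support_cube finite_cube] by unfold_locales

text \<open>\<open>f \<circ> freeze n K r i\<close> depends only on the coordinates outside \<open>K \<union> {i}\<close>, so negative
  regression applies to it, and it agrees with \<open>f\<close> on the branch \<open>X\<^sub>i = 0\<close> of \<open>cylinder K r\<close>.\<close>
definition freeze :: "nat \<Rightarrow> nat set \<Rightarrow> (nat \<Rightarrow> bool) \<Rightarrow> nat \<Rightarrow> (nat \<Rightarrow> bool) \<Rightarrow> nat \<Rightarrow> bool" where
  "freeze n K r i x = override_on (\<lambda>j. j \<in> K \<and> r j) x ({..<n} - insert i K)"

lemma freeze_in_cube: "K \<subseteq> {..<n} \<Longrightarrow> freeze n K r i x \<in> cube n"
  unfolding freeze_def cube_def override_on_def by auto

lemma freeze_hamming:
  "card {j. j < n \<and> freeze n K r i u j \<noteq> freeze n K r i v j} = card {j\<in>{..<n} - insert i K. u j \<noteq> v j}"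
  unfolding freeze_def override_on_def by (rule arg_cong[where f = card]) auto

lemma freeze_cylinder:
  assumes "x \<in> cube n" "x \<in> cylinder K r" "i \<notin> K"
  shows "freeze n K r i x = x(i := False)"
  using assms unfolding freeze_def override_on_def cube_def cylinder_def
  by (auto simp: fun_eq_iff not_less)

lemma freeze_mono:
  "\<forall>j\<in>{..<n} - insert i K. x j \<le> y j \<Longrightarrow> \<forall>j<n. freeze n K r i x j \<le> freeze n K r i y j"
  unfolding freeze_def override_on_def by auto

context cube_distribution
begin

lemma cexp_freeze_gap:
  assumes nr: "negative_regression n P" and lip: "lipschitz1 n f"
    and K: "K \<subseteq> {..<n}" and i: "i < n" "i \<notin> K"
    and corr: "nonneg_corr P (cylinder K r) (ones ({..<n} - K)) i"
    and pT: "measure_pmf.prob P (cylinder K r \<inter> {x. x i}) > 0"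
    and pF: "measure_pmf.prob P (cylinder K r \<inter> {x. \<not> x i}) > 0"
  shows "\<bar>cexp P (cylinder K r \<inter> {x. x i}) (\<lambda>x. f (freeze n K r i x))
          - cexp P (cylinder K r \<inter> {x. \<not> x i}) (\<lambda>x. f (freeze n K r i x))\<bar> \<le> 1"
proof -
  define I where "I = {..<n} - insert i K"
  define g where "g x = f (freeze n K r i x)" for x
  define HT where "HT = cylinder K r \<inter> {x. x i}"
  define HF where "HF = cylinder K r \<inter> {x. \<not> x i}"
  have I: "finite I" by (simp add: I_def)
  have dist: "g u - g v \<le> card {j\<in>I. u j \<noteq> v j}" for u v
    using lipschitz1_hamming[OF lip freeze_in_cube[OF K, of r i u] freeze_in_cube[OF K, of r i v]]
    unfolding g_def I_def freeze_hamming .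
  have up: "cexp P HT (\<lambda>x. g x + ones I x) \<le> cexp P HF (\<lambda>x. g x + ones I x)"
    unfolding HT_def HF_def
    by (rule negative_regression_branch[OF nr K i pT pF]) (use ones_add_mono(1)[OF I dist] in \<open>simp add: I_def\<close>)
  have down: "cexp P HT (\<lambda>x. ones I x - g x) \<le> cexp P HF (\<lambda>x. ones I x - g x)"
    unfolding HT_def HF_def
    by (rule negative_regression_branch[OF nr K i pT pF]) (use ones_add_mono(2)[OF I dist] in \<open>simp add: I_def\<close>)
  have ones_insert: "ones ({..<n} - K) x = ones I x + of_bool (x i)" for x
  proof -
    have "{..<n} - K = insert i I" "i \<notin> I" using i by (auto simp: I_def)
    then show ?thesis unfolding ones_def using I by simp
  qed
  have "cexp P HF (ones ({..<n} - K)) \<le> cexp P HT (ones ({..<n} - K))"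
    using nonneg_corr_cexp[OF corr pT pF] by (simp add: HT_def HF_def)
  moreover have "cexp P HF (ones ({..<n} - K)) = cexp P HF (ones I)"
    by (rule cexp_cong) (simp add: ones_insert HF_def)
  moreover have "cexp P HT (ones ({..<n} - K)) = cexp P HT (\<lambda>x. ones I x + 1)"
    by (rule cexp_cong) (simp add: ones_insert HT_def)
  ultimately have "cexp P HF (ones I) \<le> cexp P HT (ones I) + 1"
    using cexp_const[OF pT] by (simp add: cexp_add HT_def)
  with up down have "\<bar>cexp P HT g - cexp P HF g\<bar> \<le> 1"
    unfolding cexp_add cexp_diff by linarith
  then show ?thesis unfolding g_def HT_def HF_def .
qed

lemma cexp_branch_gap:
  assumes nr: "negative_regression n P" and lip: "lipschitz1 n f"
    and K: "K \<subseteq> {..<n}" and i: "i < n" "i \<notin> K"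
    and corr: "nonneg_corr P (cylinder K r) (ones ({..<n} - K)) i"
    and pT: "measure_pmf.prob P (cylinder K r \<inter> {x. x i}) > 0"
    and pF: "measure_pmf.prob P (cylinder K r \<inter> {x. \<not> x i}) > 0"
  shows "\<bar>cexp P (cylinder K r \<inter> {x. x i}) f - cexp P (cylinder K r \<inter> {x. \<not> x i}) f\<bar>
          \<le> (if monotone_cube n f then 1 else 2)"
proof -
  define g where "g x = f (freeze n K r i x)" for x
  define HT where "HT = cylinder K r \<inter> {x. x i}"
  define HF where "HF = cylinder K r \<inter> {x. \<not> x i}"
  have in_cube: "x \<in> cube n" if "x \<in> set_pmf P" for x using support_cube that by auto
  have gap: "\<bar>cexp P HT g - cexp P HF g\<bar> \<le> 1"
    using cexp_freeze_gap[OF assms] unfolding g_def HT_def HF_def .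
  have F: "cexp P HF f = cexp P HF g"
    by (rule cexp_cong) (simp add: HF_def g_def freeze_cylinder[OF in_cube _ i(2)] fun_upd_idem)
  have T: "cexp P HT f - cexp P HT g = cexp P HT (\<lambda>x. f x - f (x(i := False)))"
    unfolding cexp_diff[symmetric]
    by (rule cexp_cong) (simp add: HT_def g_def freeze_cylinder[OF in_cube _ i(2)])
  have flip: "-1 \<le> f x - f (x(i := False)) \<and> f x - f (x(i := False)) \<le> 1"
    if "x \<in> set_pmf P" "x i" for x
    using lip in_cube[OF that(1)] i(1) that(2) unfolding lipschitz1_def abs_le_iff by force
  have pT': "measure_pmf.prob P HT > 0" using pT by (simp add: HT_def)
  have T_bound: "-1 \<le> cexp P HT (\<lambda>x. f x - f (x(i := False))) \<and> cexp P HT (\<lambda>x. f x - f (x(i := False))) \<le> 1"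
    by (rule cexp_bounded[OF pT']) (use flip in \<open>simp add: HT_def\<close>)
  show ?thesis
  proof (cases "monotone_cube n f")
    case False
    then show ?thesis using gap F T T_bound unfolding HT_def HF_def by (simp add: abs_le_iff)
  next
    case True
    have "f (x(i := False)) \<le> f x" if "x \<in> set_pmf P" for x
      using True cube_upd[OF in_cube[OF that] i(1)] in_cube[OF that] unfolding monotone_cube_def by simp
    then have "0 \<le> cexp P HT (\<lambda>x. f x - f (x(i := False)))"
      using cexp_bounded[OF pT', of 0 "\<lambda>x. f x - f (x(i := False))" 1] flip by (force simp: HT_def)
    moreover have "cexp P HT g \<le> cexp P HF g"
      unfolding HT_def HF_def g_def
      by (rule negative_regression_branch[OF nr K i pT pF])
         (use True freeze_mono freeze_in_cube[OF K] in \<open>simp add: monotone_cube_def\<close>)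
    ultimately show ?thesis using True gap F T T_bound unfolding HT_def HF_def by (simp add: abs_le_iff)
  qed
qed

end

definition next_coord :: "nat \<Rightarrow> (nat \<Rightarrow> bool) pmf \<Rightarrow> nat set \<Rightarrow> (nat \<Rightarrow> bool) \<Rightarrow> nat" where
  "next_coord n P K r = (SOME i. i < n \<and> i \<notin> K \<and> nonneg_corr P (cylinder K r) (ones ({..<n} - K)) i)"

fun revealed :: "nat \<Rightarrow> (nat \<Rightarrow> bool) pmf \<Rightarrow> nat \<Rightarrow> (nat \<Rightarrow> bool) \<Rightarrow> nat list" where
  "revealed n P 0 x = []"
| "revealed n P (Suc k) x = revealed n P k x @ [next_coord n P (set (revealed n P k x)) x]"

definition adaptive_perm :: "nat \<Rightarrow> (nat \<Rightarrow> bool) pmf \<Rightarrow> (nat \<Rightarrow> bool) \<Rightarrow> nat \<Rightarrow> nat" where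
  "adaptive_perm n P x k = revealed n P (Suc k) x ! k"

lemma next_coord_cong: "\<forall>j\<in>K. y j = x j \<Longrightarrow> next_coord n P K y = next_coord n P K x"
  unfolding next_coord_def cylinder_def by simp

lemma length_revealed [simp]: "length (revealed n P k x) = k"
  by (induction k) auto

lemma nth_revealed: "j < k \<Longrightarrow> revealed n P k x ! j = adaptive_perm n P x j"
proof (induction k)
  case (Suc k)
  then show ?case
    by (cases "j < k") (auto simp: nth_append adaptive_perm_def less_Suc_eq)
qed simp

lemma set_revealed: "set (revealed n P k x) = adaptive_perm n P x ` {..<k}"
proof -
  have "set (revealed n P k x) = (!) (revealed n P k x) ` {..<k}"
    using nth_image[of k "revealed n P k x"] by (simp add: lessThan_atLeast0)
  also have "\<dots> = adaptive_perm n P x ` {..<k}"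
    by (rule image_cong) (simp_all add: nth_revealed)
  finally show ?thesis .
qed

lemma adaptive_perm_eq_next_coord:
  "adaptive_perm n P x k = next_coord n P (adaptive_perm n P x ` {..<k}) x"
proof -
  have "adaptive_perm n P x k = next_coord n P (set (revealed n P k x)) x"
    by (simp add: adaptive_perm_def nth_append)
  then show ?thesis unfolding set_revealed .
qed

lemma revealed_cong: "\<forall>j\<in>set (revealed n P k x). y j = x j \<Longrightarrow> revealed n P k y = revealed n P k x"
proof (induction k)
  case (Suc k)
  then have "revealed n P k y = revealed n P k x" by simp
  moreover have "next_coord n P (set (revealed n P k x)) y = next_coord n P (set (revealed n P k x)) x"
    using Suc.prems by (intro next_coord_cong) simp
  ultimately show ?case by simp
qed simp

lemma adaptive_perm_cong:
  assumes "y \<in> cylinder (adaptive_perm n P x ` {..<k}) x" "j \<le> k"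
  shows "adaptive_perm n P y j = adaptive_perm n P x j"
proof -
  have revealed_eq: "revealed n P k y = revealed n P k x"
    using assms(1) by (intro revealed_cong) (simp add: set_revealed cylinder_def)
  show ?thesis
  proof (cases "j < k")
    case True
    have "adaptive_perm n P y j = revealed n P k y ! j" using True by (simp add: nth_revealed)
    also have "\<dots> = revealed n P k x ! j" by (simp add: revealed_eq)
    also have "\<dots> = adaptive_perm n P x j" using True by (simp add: nth_revealed)
    finally show ?thesis .
  next
    case False
    then have "j = k" using assms(2) by simp
    have "adaptive_perm n P y k = next_coord n P (adaptive_perm n P y ` {..<k}) y"
      by (rule adaptive_perm_eq_next_coord)
    also have "\<dots> = next_coord n P (adaptive_perm n P x ` {..<k}) y"
      using arg_cong[OF revealed_eq, of set] by (simp add: set_revealed)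
    also have "\<dots> = next_coord n P (adaptive_perm n P x ` {..<k}) x"
      using assms(1) by (intro next_coord_cong) (simp add: cylinder_def)
    also have "\<dots> = adaptive_perm n P x k"
      by (rule adaptive_perm_eq_next_coord[symmetric])
    finally show ?thesis using \<open>j = k\<close> by simp
  qed
qed

lemma adaptive_perm_determined:
  assumes "adaptive_perm n P x ` {..<k} = adaptive_perm n P y ` {..<k}"
    and "\<forall>i\<in>adaptive_perm n P x ` {..<k}. x i = y i"
  shows "adaptive_perm n P x k = adaptive_perm n P y k"
proof -
  have "x \<in> cylinder (adaptive_perm n P y ` {..<k}) y" using assms by (simp add: cylinder_def)
  then show ?thesis by (rule adaptive_perm_cong) simp
qed

lemma hist_eq_if_mem: "y \<in> hist \<pi> k x \<Longrightarrow> hist \<pi> k y = hist \<pi> k x"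
  unfolding hist_def by auto

lemma hist_adaptive_perm: "hist (adaptive_perm n P) k x = cylinder (adaptive_perm n P x ` {..<k}) x"
proof
  show "hist (adaptive_perm n P) k x \<subseteq> cylinder (adaptive_perm n P x ` {..<k}) x"
    unfolding hist_def cylinder_def by auto
  show "cylinder (adaptive_perm n P x ` {..<k}) x \<subseteq> hist (adaptive_perm n P) k x"
  proof
    fix y assume y: "y \<in> cylinder (adaptive_perm n P x ` {..<k}) x"
    then have "adaptive_perm n P y ` {..<k} = adaptive_perm n P x ` {..<k}"
      using adaptive_perm_cong[OF y] by (intro image_cong) auto
    then show "y \<in> hist (adaptive_perm n P) k x"
      using y unfolding hist_def cylinder_def by simp
  qed
qed

lemma hist_adaptive_perm_Suc:
  "hist (adaptive_perm n P) (Suc k) x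
     = hist (adaptive_perm n P) k x \<inter> {y. y (adaptive_perm n P x k) = x (adaptive_perm n P x k)}"
  unfolding hist_adaptive_perm by (auto simp: cylinder_def lessThan_Suc)

lemma distinct_prefix_psubset:
  assumes "distinct xs" "set xs \<subseteq> {..<n}" "length xs < n"
  shows "set xs \<subset> {..<n}"
proof (rule psubsetI[OF assms(2)])
  show "set xs \<noteq> {..<n}"
  proof
    assume "set xs = {..<n}"
    then have "length xs = n" using distinct_card[OF assms(1)] by simp
    with assms(3) show False by simp
  qed
qed

context finite_support
begin

lemma next_coord_spec:
  assumes "K \<subset> {..<n}"
  shows "next_coord n P K r < n \<and> next_coord n P K r \<notin> K
    \<and> nonneg_corr P (cylinder K r) (ones ({..<n} - K)) (next_coord n P K r)"
proof -
  have "\<exists>i\<in>{..<n} - K. nonneg_corr P (cylinder K r) (ones ({..<n} - K)) i"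
    using assms by (intro ex_nonneg_corr) auto
  then have "\<exists>i. i < n \<and> i \<notin> K \<and> nonneg_corr P (cylinder K r) (ones ({..<n} - K)) i"
    by auto
  then show ?thesis unfolding next_coord_def by (rule someI_ex)
qed

lemma revealed_distinct: "k \<le> n \<Longrightarrow> distinct (revealed n P k x) \<and> set (revealed n P k x) \<subseteq> {..<n}"
proof (induction k)
  case (Suc k)
  then have "distinct (revealed n P k x)" "set (revealed n P k x) \<subseteq> {..<n}" by simp_all
  moreover from this have "set (revealed n P k x) \<subset> {..<n}"
    using Suc.prems by (intro distinct_prefix_psubset) simp_all
  ultimately show ?case using next_coord_spec[of "set (revealed n P k x)" n x] by auto
qed simp

lemma adaptive_perm_prefix_psubset: "k < n \<Longrightarrow> adaptive_perm n P x ` {..<k} \<subset> {..<n}"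
  using revealed_distinct[of k n x] distinct_prefix_psubset[of "revealed n P k x" n]
  by (simp add: set_revealed)

lemma bij_adaptive_perm: "bij_betw (adaptive_perm n P x) {..<n} {..<n}"
proof -
  have v: "distinct (revealed n P n x)" "set (revealed n P n x) \<subseteq> {..<n}"
    using revealed_distinct[of n n x] by simp_all
  have inj: "inj_on (adaptive_perm n P x) {..<n}"
  proof
    fix a b assume "a \<in> {..<n}" "b \<in> {..<n}" "adaptive_perm n P x a = adaptive_perm n P x b"
    then have "revealed n P n x ! a = revealed n P n x ! b" "a < n" "b < n"
      by (simp_all add: nth_revealed)
    then show "a = b" using v(1) nth_eq_iff_index_eq[of "revealed n P n x" a b] by simp
  qed
  moreover have "adaptive_perm n P x ` {..<n} = {..<n}"
    using endo_inj_surj[OF _ _ inj] v(2) by (simp add: set_revealed)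
  ultimately show ?thesis by (simp add: bij_betw_def)
qed

lemma martingale_adaptive_perm:
  "cexp P (hist (adaptive_perm n P) k x) (Ymart P f (adaptive_perm n P) (Suc k))
     = Ymart P f (adaptive_perm n P) k x"
proof -
  define H where "H = hist (adaptive_perm n P) k x"
  define i where "i = adaptive_perm n P x k"
  have Y_next: "Ymart P f (adaptive_perm n P) (Suc k) y = cexp P (H \<inter> {z. z i = y i}) f" if "y \<in> H" for y
  proof -
    have "hist (adaptive_perm n P) k y = H" using hist_eq_if_mem that by (simp add: H_def)
    moreover have "adaptive_perm n P y k = i"
      using that adaptive_perm_cong[of y n P x k k] by (simp add: H_def i_def hist_adaptive_perm)
    ultimately show ?thesis by (simp add: Ymart_def hist_adaptive_perm_Suc[of n P k y])
  qed
  have "cexp P H (Ymart P f (adaptive_perm n P) (Suc k)) = cexp P H (\<lambda>y. cexp P (H \<inter> {z. z i = y i}) f)"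
    by (rule cexp_cong) (simp add: Y_next)
  also have "\<dots> = cexp P H f" by (rule cexp_binary_tower)
  also have "\<dots> = Ymart P f (adaptive_perm n P) k x" by (simp add: H_def Ymart_def)
  finally show ?thesis unfolding H_def .
qed

end

lemma ex_interval_of_width:
  fixes d :: "'a \<Rightarrow> real"
  assumes "finite S" "B > 0" and close: "\<And>y z. y \<in> S \<Longrightarrow> z \<in> S \<Longrightarrow> \<bar>d y - d z\<bar> \<le> B"
  shows "\<exists>\<alpha> \<beta>. \<alpha> < \<beta> \<and> \<beta> - \<alpha> \<le> B \<and> (\<forall>y\<in>S. d y \<in> {\<alpha>..\<beta>})"
proof (cases "S = {}")
  case True
  then show ?thesis using assms(2) by (intro exI[of _ 0] exI[of _ B]) auto
next
  case False
  define M where "M = Max (d ` S)"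
  have "M \<in> d ` S" unfolding M_def using assms(1) False by (intro Max_in) auto
  then obtain z where z: "z \<in> S" "d z = M" by blast
  have "d y \<in> {M - B..M}" if "y \<in> S" for y
    using Max_ge[of "d ` S" "d y"] close[OF that z(1)] assms(1) that z(2) unfolding M_def by auto
  then show ?thesis using assms(2) by (intro exI[of _ "M - B"] exI[of _ M]) auto
qed

context cube_distribution
begin

lemma increment_close:
  assumes nr: "negative_regression n P" and lip: "lipschitz1 n f" and k: "k < n"
    and y: "y \<in> set_pmf P" and z: "z \<in> set_pmf P" "z \<in> hist (adaptive_perm n P) k y"
  shows "\<bar>(Ymart P f (adaptive_perm n P) (Suc k) y - Ymart P f (adaptive_perm n P) k y)
          - (Ymart P f (adaptive_perm n P) (Suc k) z - Ymart P f (adaptive_perm n P) k z)\<bar>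
          \<le> (if monotone_cube n f then 1 else 2)"
proof -
  define K where "K = adaptive_perm n P y ` {..<k}"
  define i where "i = adaptive_perm n P y k"
  define H where "H = hist (adaptive_perm n P) k y"
  have H: "H = cylinder K y" by (simp add: H_def K_def hist_adaptive_perm)
  have hist_z: "hist (adaptive_perm n P) k z = H" using hist_eq_if_mem[OF z(2)] by (simp add: H_def)
  have i_z: "adaptive_perm n P z k = i"
    using z(2) adaptive_perm_cong[of z n P y k k] by (simp add: i_def hist_adaptive_perm)
  have incr: "Ymart P f (adaptive_perm n P) (Suc k) w - Ymart P f (adaptive_perm n P) k w
      = cexp P (H \<inter> {u. u i = w i}) f - cexp P H f"
    if "hist (adaptive_perm n P) k w = H" "adaptive_perm n P w k = i" for w
    using that by (simp add: Ymart_def hist_adaptive_perm_Suc)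
  note incr_y = incr[OF H_def[symmetric] i_def[symmetric]] and incr_z = incr[OF hist_z i_z]
  show ?thesis
  proof (cases "y i = z i")
    case True
    then show ?thesis by (simp add: incr_y incr_z)
  next
    case False
    have K_sub: "K \<subset> {..<n}" using adaptive_perm_prefix_psubset[OF k] by (simp add: K_def)
    have "i = next_coord n P K y" unfolding i_def K_def by (rule adaptive_perm_eq_next_coord)
    then have i_spec: "i < n" "i \<notin> K" "nonneg_corr P (cylinder K y) (ones ({..<n} - K)) i"
      using next_coord_spec[OF K_sub, of y] by simp_all
    have pos: "measure_pmf.prob P (H \<inter> {u. u i = w i}) > 0" if "w \<in> set_pmf P" "w \<in> H" for w
    proof -
      have "set_pmf P \<inter> (H \<inter> {u. u i = w i}) \<noteq> {}" using that by blast
      then have "measure_pmf.prob P (H \<inter> {u. u i = w i}) \<noteq> 0" by (simp add: measure_pmf_zero_iff)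
      then show ?thesis using measure_nonneg[of P "H \<inter> {u. u i = w i}"] by linarith
    qed
    have "y \<in> H" "z \<in> H" using z(2) by (simp_all add: H_def hist_def)
    then have pT: "measure_pmf.prob P (cylinder K y \<inter> {u. u i}) > 0"
      and pF: "measure_pmf.prob P (cylinder K y \<inter> {u. \<not> u i}) > 0"
      using pos[OF y] pos[OF z(1)] False unfolding H by (cases "y i"; simp)+
    have "\<bar>cexp P (H \<inter> {u. u i}) f - cexp P (H \<inter> {u. \<not> u i}) f\<bar>
        \<le> (if monotone_cube n f then 1 else 2)"
      unfolding H using cexp_branch_gap[OF nr lip psubset_imp_subset[OF K_sub] i_spec pT pF] .
    then show ?thesis using False by (cases "y i") (simp_all add: incr_y incr_z abs_minus_commute)
  qed
qed

lemma increment_interval: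
  assumes nr: "negative_regression n P" and lip: "lipschitz1 n f" and k: "k < n"
  shows "\<exists>\<alpha> \<beta>. \<alpha> < \<beta> \<and> \<beta> - \<alpha> \<le> (if monotone_cube n f then 1 else 2) \<and>
    (\<forall>y\<in>set_pmf P. adaptive_perm n P y ` {..<k} = K \<and> (\<forall>i\<in>K. y i = a i) \<longrightarrow>
       Ymart P f (adaptive_perm n P) (Suc k) y - Ymart P f (adaptive_perm n P) k y \<in> {\<alpha>..\<beta>})"
proof -
  define S where "S = set_pmf P \<inter> {y. adaptive_perm n P y ` {..<k} = K \<and> (\<forall>i\<in>K. y i = a i)}"
  define d where "d y = Ymart P f (adaptive_perm n P) (Suc k) y - Ymart P f (adaptive_perm n P) k y" for y
  have "\<exists>\<alpha> \<beta>. \<alpha> < \<beta> \<and> \<beta> - \<alpha> \<le> (if monotone_cube n f then 1 else 2) \<and> (\<forall>y\<in>S. d y \<in> {\<alpha>..\<beta>})"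
  proof (rule ex_interval_of_width)
    show "finite S" using finite_support by (simp add: S_def)
    show "(0::real) < (if monotone_cube n f then 1 else 2)" by simp
    fix y z assume "y \<in> S" "z \<in> S"
    then show "\<bar>d y - d z\<bar> \<le> (if monotone_cube n f then 1 else 2)"
      unfolding d_def by (intro increment_close[OF nr lip k]) (auto simp: S_def hist_def)
  qed
  then obtain \<alpha> \<beta> where "\<alpha> < \<beta>" "\<beta> - \<alpha> \<le> (if monotone_cube n f then 1 else 2)"
    "\<forall>y\<in>S. d y \<in> {\<alpha>..\<beta>}"
    by blast
  then show ?thesis unfolding S_def d_def by (intro exI[of _ \<alpha>] exI[of _ \<beta>]) auto
qed

end

theorem mainTheorem4:
  fixes n :: nat and P :: "(nat \<Rightarrow> bool) pmf" and f :: "(nat \<Rightarrow> bool) \<Rightarrow> real"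
  assumes "set_pmf P \<subseteq> cube n"
    and "negative_regression n P"
    and "lipschitz1 n f"
  shows "\<exists>\<pi> :: (nat \<Rightarrow> bool) \<Rightarrow> nat \<Rightarrow> nat.
     (\<forall>x\<in>set_pmf P. bij_betw (\<pi> x) {..<n} {..<n}) \<and>
     (\<forall>x\<in>set_pmf P. \<forall>y\<in>set_pmf P. \<pi> x 0 = \<pi> y 0) \<and>
     (\<forall>k. 1 \<le> k \<and> k < n \<longrightarrow> (\<forall>x\<in>set_pmf P. \<forall>y\<in>set_pmf P.
         \<pi> x ` {..<k} = \<pi> y ` {..<k} \<and> (\<forall>i\<in>\<pi> x ` {..<k}. x i = y i) \<longrightarrow> \<pi> x k = \<pi> y k)) \<and>
     (\<forall>k<n. \<forall>x\<in>set_pmf P.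
         cexp P (hist \<pi> k x) (Ymart P f \<pi> (Suc k)) = Ymart P f \<pi> k x) \<and>
     (\<forall>k<n. \<forall>K a. measure_pmf.prob P {y. \<pi> y ` {..<k} = K \<and> (\<forall>i\<in>K. y i = a i)} > 0 \<longrightarrow>
         (\<exists>\<alpha> \<beta>. \<alpha> < \<beta> \<and> \<beta> - \<alpha> \<le> (if monotone_cube n f then 1 else 2) \<and>
            (\<forall>y\<in>set_pmf P. \<pi> y ` {..<k} = K \<and> (\<forall>i\<in>K. y i = a i) \<longrightarrow>
               Ymart P f \<pi> (Suc k) y - Ymart P f \<pi> k y \<in> {\<alpha>..\<beta>})))"
proof -
  interpret cube_distribution n P by unfold_locales (rule assms(1))
  let ?\<pi> = "adaptive_perm n P"
  show ?thesis
  proof (intro exI[of _ ?\<pi>] conjI)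
    show "\<forall>x\<in>set_pmf P. bij_betw (?\<pi> x) {..<n} {..<n}"
      using bij_adaptive_perm by blast
    show "\<forall>x\<in>set_pmf P. \<forall>y\<in>set_pmf P. ?\<pi> x 0 = ?\<pi> y 0"
      using adaptive_perm_determined[where k = 0] by simp
    show "\<forall>k. 1 \<le> k \<and> k < n \<longrightarrow> (\<forall>x\<in>set_pmf P. \<forall>y\<in>set_pmf P.
        ?\<pi> x ` {..<k} = ?\<pi> y ` {..<k} \<and> (\<forall>i\<in>?\<pi> x ` {..<k}. x i = y i) \<longrightarrow> ?\<pi> x k = ?\<pi> y k)"
      by (intro allI impI ballI) (elim conjE, rule adaptive_perm_determined)
    show "\<forall>k<n. \<forall>x\<in>set_pmf P. cexp P (hist ?\<pi> k x) (Ymart P f ?\<pi> (Suc k)) = Ymart P f ?\<pi> k x"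
      by (intro allI impI ballI) (rule martingale_adaptive_perm)
    show "\<forall>k<n. \<forall>K a. measure_pmf.prob P {y. ?\<pi> y ` {..<k} = K \<and> (\<forall>i\<in>K. y i = a i)} > 0 \<longrightarrow>
        (\<exists>\<alpha> \<beta>. \<alpha> < \<beta> \<and> \<beta> - \<alpha> \<le> (if monotone_cube n f then 1 else 2) \<and>
          (\<forall>y\<in>set_pmf P. ?\<pi> y ` {..<k} = K \<and> (\<forall>i\<in>K. y i = a i) \<longrightarrow>
             Ymart P f ?\<pi> (Suc k) y - Ymart P f ?\<pi> k y \<in> {\<alpha>..\<beta>}))"
      by (intro allI impI) (rule increment_interval[OF assms(2,3)])
  qed
qed

end
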